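(* Consider the D2EAL algorithm (without periodic reset) described in the context with horizon $T\ge1$ and $\eta_\alpha,\eta_w>0$. Assume (Assumption 2) that $|l(x_1,y)-l(x_2,y)|\le L_1\|x_1-x_2\|$ for all $x_1,x_2\in\mathcal A$, $y\in\mathcal Y$, for some constant $L_1\ge0$; and (Assumption 3) that there are nonnegative numbers $\delta_1,\dots,\delta_T$ with $\|f_{t,i}-f_{t,j}\|\le\delta_t$ for all $i,j\in[N]$ and $t=1,\dots,T$. Let $\Delta_o\ge\sum_{t=1}^T\delta_t$ and let $i^*\in\arg\min_{j\in[N]}L_{T,j}$. Then for every $i\in[N]$, $$R_i^{GI}(T):=\bar L_{T,i}-L_{T,i^*}\le\frac{\eta_\alpha T}{8}+\frac{\log2}{\eta_\alpha}+L_1\Delta_o.$$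
   Context: Setup. There are $N\ge 1$ agents indexed by $i\in[N]$ and a horizon $T\ge1$. The outcome space $\mathcal Y$ and action space $\mathcal A$ are convex subsets of $\mathbb R^n$, $\|\cdot\|$ is the Euclidean norm. The loss $l:\mathcal A\times\mathcal Y\to[0,1]$ is convex in its first argument. The target sequence $y_1,\dots,y_T\in\mathcal Y$ is arbitrary. For each agent $i$ and each $t\ge1$, an "expert" supplies an arbitrary prediction $f_{t,i}\in\mathcal A$ of $y_t$ (available at time $t-1$). Agents communicate over a time-varying undirected graph; $\Omega_i(t)$ is the set of neighbours of agent $i$ at time $t$, $\Lambda_i(t):=\Omega_i(t)\cup\{i\}$ and $d_i(t):=|\Lambda_i(t)|$. D2EAL (without periodic reset). Initialize $\hat f_{0,i}=f_{1,i}$, $\hat\alpha_i(0)=\hat\alpha'_i(0)=\hat w_{ii}(0)=1$ for all $i$. For $t=0,1,\dots,T-1$, each agent $i$ computes: $\alpha_i(t)=\hat\alpha_i(t)/(\hat\alpha_i(t)+\hat\alpha'_i(t))$; individual prediction $\bar f_{t+1,i}=\alpha_i(t)f_{t+1,i}+(1-\alpha_i(t))\hat f_{t,i}$; social weights $w_{ij}(t)=\hat w_{jj}(t)/\sum_{j'\in\Lambda_i(t)}\hat w_{j'j'}(t)$ for $j\in\Lambda_i(t)$ and $w_{ij}(t)=0$ otherwise; social prediction $\hat f_{t+1,i}=\sum_{j\in\Lambda_i(t)}w_{ij}(t)\bar f_{t+1,j}$. After $y_{t+1}$ is revealed, define the losses $l_{t+1,i}=l(f_{t+1,i},y_{t+1})$,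 $\hat l^-_{t+1,i}=l(\hat f_{t,i},y_{t+1})$, $\bar l_{t+1,i}=l(\bar f_{t+1,i},y_{t+1})$, $\hat l_{t+1,i}=l(\hat f_{t+1,i},y_{t+1})$, and update $\hat\alpha_i(t+1)=\hat\alpha_i(t)e^{-\eta_\alpha l_{t+1,i}}$, $\hat\alpha'_i(t+1)=\hat\alpha'_i(t)e^{-\eta_\alpha \hat l^-_{t+1,i}}$, $\hat w_{ii}(t+1)=\hat w_{ii}(t)e^{-\eta_w\bar l_{t+1,i}}$. Cumulative losses: $L_{T,i}=\sum_{t=1}^T l_{t,i}$, $\hat L^-_{T,i}=\sum_{t=1}^T\hat l^-_{t,i}$, $\bar L_{T,i}=\sum_{t=1}^T\bar l_{t,i}$, $\hat L_{T,i}=\sum_{t=1}^T\hat l_{t,i}$. *)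

theory Defs
  imports "HOL-Analysis.Analysis"
begin

text \<open>Agents are the naturals i < N. Time-varying neighbour sets: Om i t is the set
of neighbours of agent i at (communication) time t, and Lambda i t = insert i (Om i t).
Experts: f t i is the prediction of y t supplied to agent i (t \<ge> 1).
The state of the algorithm after step t (t = 0,1,...) is a tuple
(alpha_hat, alpha_hat', w_hat_ii, f_hat_t) of functions of the agent index.\<close>

type_synonym 'a d2eal_state = "(nat \<Rightarrow> real) \<times> (nat \<Rightarrow> real) \<times> (nat \<Rightarrow> real) \<times> (nat \<Rightarrow> 'a)"

definition Lam :: "(nat \<Rightarrow> nat \<Rightarrow> nat set) \<Rightarrow> nat \<Rightarrow> nat \<Rightarrow> nat set" where
  "Lam Om i t = insert i (Om i t)"

definition d2_alpha :: "'a d2eal_state \<Rightarrow> nat \<Rightarrow> real" where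
  "d2_alpha st i = (case st of (ah, ah', wh, fh) \<Rightarrow> ah i / (ah i + ah' i))"

text \<open>individual prediction bar f_{t+1,i} computed from the state at time t\<close>
definition d2_fbar_next :: "(nat \<Rightarrow> nat \<Rightarrow> 'a::real_vector) \<Rightarrow> nat \<Rightarrow> 'a d2eal_state \<Rightarrow> nat \<Rightarrow> 'a" where
  "d2_fbar_next f t st i = (case st of (ah, ah', wh, fh) \<Rightarrow>
      d2_alpha st i *\<^sub>R f (t+1) i + (1 - d2_alpha st i) *\<^sub>R fh i)"

definition d2_w :: "(nat \<Rightarrow> nat \<Rightarrow> nat set) \<Rightarrow> nat \<Rightarrow> 'a d2eal_state \<Rightarrow> nat \<Rightarrow> nat \<Rightarrow> real" where
  "d2_w Om t st i j = (case st of (ah, ah', wh, fh) \<Rightarrow>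
      (if j \<in> Lam Om i t then wh j / (\<Sum>j'\<in>Lam Om i t. wh j') else 0))"

definition d2_fhat_next :: "(nat \<Rightarrow> nat \<Rightarrow> 'a::real_vector) \<Rightarrow> (nat \<Rightarrow> nat \<Rightarrow> nat set) \<Rightarrow> nat \<Rightarrow> 'a d2eal_state \<Rightarrow> nat \<Rightarrow> 'a" where
  "d2_fhat_next f Om t st i = (\<Sum>j\<in>Lam Om i t. d2_w Om t st i j *\<^sub>R d2_fbar_next f t st j)"

fun d2eal_state :: "('a::real_vector \<Rightarrow> 'a \<Rightarrow> real) \<Rightarrow> (nat \<Rightarrow> nat \<Rightarrow> 'a) \<Rightarrow> (nat \<Rightarrow> 'a)
    \<Rightarrow> (nat \<Rightarrow> nat \<Rightarrow> nat set) \<Rightarrow> real \<Rightarrow> real \<Rightarrow> nat \<Rightarrow> 'a d2eal_state" where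
  "d2eal_state l f y Om ea ew 0 = ((\<lambda>i. 1), (\<lambda>i. 1), (\<lambda>i. 1), (\<lambda>i. f 1 i))"
| "d2eal_state l f y Om ea ew (Suc t) =
     (let st = d2eal_state l f y Om ea ew t in
      case st of (ah, ah', wh, fh) \<Rightarrow>
        ((\<lambda>i. ah i * exp (- ea * l (f (t+1) i) (y (t+1)))),
         (\<lambda>i. ah' i * exp (- ea * l (fh i) (y (t+1)))),
         (\<lambda>i. wh i * exp (- ew * l (d2_fbar_next f t st i) (y (t+1)))),
         (\<lambda>i. d2_fhat_next f Om t st i)))"

text \<open>bar f_{t,i} for t \<ge> 1 (computed at step t-1)\<close>
definition d2_fbar :: "('a::real_vector \<Rightarrow> 'a \<Rightarrow> real) \<Rightarrow> (nat \<Rightarrow> nat \<Rightarrow> 'a) \<Rightarrow> (nat \<Rightarrow> 'a)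
    \<Rightarrow> (nat \<Rightarrow> nat \<Rightarrow> nat set) \<Rightarrow> real \<Rightarrow> real \<Rightarrow> nat \<Rightarrow> nat \<Rightarrow> 'a" where
  "d2_fbar l f y Om ea ew t i = d2_fbar_next f (t - 1) (d2eal_state l f y Om ea ew (t - 1)) i"

definition cumL :: "('a \<Rightarrow> 'a \<Rightarrow> real) \<Rightarrow> (nat \<Rightarrow> nat \<Rightarrow> 'a) \<Rightarrow> (nat \<Rightarrow> 'a) \<Rightarrow> nat \<Rightarrow> nat \<Rightarrow> real" where
  "cumL l f y T i = (\<Sum>t=1..T. l (f t i) (y t))"

definition cumLbar :: "('a::real_vector \<Rightarrow> 'a \<Rightarrow> real) \<Rightarrow> (nat \<Rightarrow> nat \<Rightarrow> 'a) \<Rightarrow> (nat \<Rightarrow> 'a)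
    \<Rightarrow> (nat \<Rightarrow> nat \<Rightarrow> nat set) \<Rightarrow> real \<Rightarrow> real \<Rightarrow> nat \<Rightarrow> nat \<Rightarrow> real" where
  "cumLbar l f y Om ea ew T i = (\<Sum>t=1..T. l (d2_fbar l f y Om ea ew t i) (y t))"

end

theory Submission
  imports Defs "HOL-Probability.Hoeffding"
begin

text \<open>Agent i's individual prediction runs Hedge on two experts: its local expert and its
own previous social prediction. By convexity of the loss and Hoeffding's lemma the potential
\<open>\<alpha>\<^sub>i(t) + \<alpha>'\<^sub>i(t)\<close> decreases in each round at most by the factor
\<open>exp (-\<eta>\<^sub>\<alpha> l + \<eta>\<^sub>\<alpha>\<^sup>2/8)\<close>, \<open>l\<close> being the loss of the individual prediction; since it
dominates \<open>\<alpha>\<^sub>i(T) = exp (-\<eta>\<^sub>\<alpha> L\<^sub>T\<^sub>,\<^sub>i)\<close>, the individual prediction has regret at most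
\<open>\<eta>\<^sub>\<alpha>T/8 + ln 2/\<eta>\<^sub>\<alpha>\<close> against the local expert, whatever the social predictions are.
The local experts are \<open>\<delta>\<^sub>t\<close>-close, so by the Lipschitz property the local expert of agent i
loses at most \<open>L\<^sub>1\<Delta>\<^sub>o\<close> more than that of \<open>i\<^sup>*\<close>.\<close>

lemma exp_neg_le_chord:
  fixes u e :: real
  assumes "0 \<le> u" "u \<le> 1"
  shows "exp (- e * u) \<le> 1 - u + u * exp (- e)"
proof -
  have "exp ((1 - u) *\<^sub>R 0 + u *\<^sub>R (- e)) \<le> (1 - u) * exp 0 + u * exp (- e)"
    by (rule convex_onD[OF exp_convex]) (use assms in auto)
  thus ?thesis by (simp add: mult.commute)
qed

lemma hoeffding_two_point:
  fixes a x z e :: real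
  assumes "0 \<le> a" "a \<le> 1" "0 \<le> x" "x \<le> 1" "0 \<le> z" "z \<le> 1" "e \<ge> 0"
  shows "a * exp (- e * x) + (1 - a) * exp (- e * z) \<le> exp (- e * (a * x + (1 - a) * z) + e\<^sup>2 / 8)"
proof -
  define m where "m = a * x + (1 - a) * z"
  have m: "0 \<le> m" "m \<le> 1"
    unfolding m_def using assms convex_bound_le[of x 1 z a "1 - a"] by auto
  have "a * exp (- e * x) + (1 - a) * exp (- e * z)
        \<le> a * (1 - x + x * exp (- e)) + (1 - a) * (1 - z + z * exp (- e))"
    using exp_neg_le_chord[of x e] exp_neg_le_chord[of z e] assms
    by (intro add_mono mult_left_mono) auto
  also have "\<dots> = exp (- e) * (1 + (1 - m) * (exp e - 1))"
    unfolding m_def by (simp add: exp_minus field_simps)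
  also have "\<dots> \<le> exp (- e) * exp (e\<^sup>2 / 8 + e * (1 - m))"
  proof (rule mult_left_mono)
    have pos: "1 + (1 - m) * (exp e - 1) > 0"
      using m assms by (smt (verit) exp_ge_add_one_self mult_nonneg_nonneg)
    have "- e * (1 - m) + ln (1 + (1 - m) * (exp e - 1)) \<le> e\<^sup>2 / 8"
      by (rule Hoeffdings_lemma_aux) (use assms m in auto)
    thus "1 + (1 - m) * (exp e - 1) \<le> exp (e\<^sup>2 / 8 + e * (1 - m))"
      using pos by (metis diff_le_eq exp_le_cancel_iff exp_ln minus_mult_left uminus_add_conv_diff)
  qed simp
  also have "\<dots> = exp (- e * m + e\<^sup>2 / 8)"
    by (simp add: mult_exp_exp algebra_simps)
  finally show ?thesis unfolding m_def .
qed

lemma hedge_potential_le: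
  fixes e :: real and a b x z p :: "nat \<Rightarrow> real"
  assumes e: "e \<ge> 0"
    and init: "a 0 = 1" "b 0 = 1"
    and a_Suc: "\<And>t. a (Suc t) = a t * exp (- e * x t)"
    and b_Suc: "\<And>t. b (Suc t) = b t * exp (- e * z t)"
    and x01: "\<And>t. 0 \<le> x t \<and> x t \<le> 1" and z01: "\<And>t. 0 \<le> z t \<and> z t \<le> 1"
    and p_le: "\<And>t. p t \<le> a t / (a t + b t) * x t + (1 - a t / (a t + b t)) * z t"
  shows "a t + b t \<le> 2 * exp (- e * (\<Sum>s<t. p s) + real t * e\<^sup>2 / 8)"
proof (induction t)
  case 0
  show ?case using init by simp
next
  case (Suc t)
  define \<alpha> where "\<alpha> = a t / (a t + b t)"
  have pos: "a s > 0 \<and> b s > 0" for s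
    by (induction s) (simp_all add: init a_Suc b_Suc)
  have W: "a t + b t > 0"
    using pos[of t] by simp
  hence \<alpha>: "0 \<le> \<alpha>" "\<alpha> \<le> 1"
    using pos[of t] unfolding \<alpha>_def by auto
  have "1 - \<alpha> = b t / (a t + b t)"
    using W unfolding \<alpha>_def by (simp add: field_simps)
  hence "a (Suc t) + b (Suc t) = (a t + b t) * (\<alpha> * exp (- e * x t) + (1 - \<alpha>) * exp (- e * z t))"
    using W unfolding a_Suc b_Suc by (simp add: \<alpha>_def distrib_left)
  also have "\<dots> \<le> (a t + b t) * exp (- e * (\<alpha> * x t + (1 - \<alpha>) * z t) + e\<^sup>2 / 8)"
    using hoeffding_two_point[of \<alpha> "x t" "z t" e] \<alpha> x01 z01 e W by (intro mult_left_mono) auto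
  also have "\<dots> \<le> (a t + b t) * exp (- e * p t + e\<^sup>2 / 8)"
    using p_le[of t] e W unfolding \<alpha>_def[symmetric] by (intro mult_left_mono) (auto simp: mult_left_mono)
  also have "\<dots> \<le> 2 * exp (- e * (\<Sum>s<t. p s) + real t * e\<^sup>2 / 8) * exp (- e * p t + e\<^sup>2 / 8)"
    using Suc.IH by (intro mult_right_mono) auto
  also have "\<dots> = 2 * exp (- e * (\<Sum>s<Suc t. p s) + real (Suc t) * e\<^sup>2 / 8)"
    by (simp add: mult.assoc flip: exp_add) (simp add: algebra_simps)
  finally show ?case .
qed

lemma hedge_two_experts_regret:
  fixes e :: real and a b x z p :: "nat \<Rightarrow> real"
  assumes e: "e > 0"
    and init: "a 0 = 1" "b 0 = 1"
    and a_Suc: "\<And>t. a (Suc t) = a t * exp (- e * x t)"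
    and b_Suc: "\<And>t. b (Suc t) = b t * exp (- e * z t)"
    and x01: "\<And>t. 0 \<le> x t \<and> x t \<le> 1" and z01: "\<And>t. 0 \<le> z t \<and> z t \<le> 1"
    and p_le: "\<And>t. p t \<le> a t / (a t + b t) * x t + (1 - a t / (a t + b t)) * z t"
  shows "(\<Sum>t<T. p t) - (\<Sum>t<T. x t) \<le> e * real T / 8 + ln 2 / e"
proof -
  have a_eq: "a t = exp (- e * (\<Sum>s<t. x s))" for t
    by (induction t) (simp_all add: init a_Suc mult_exp_exp algebra_simps)
  have "b T > 0"
    by (induction T) (simp_all add: init b_Suc)
  hence "exp (- e * (\<Sum>t<T. x t)) \<le> a T + b T"
    using a_eq[of T] by simp
  also have "\<dots> \<le> 2 * exp (- e * (\<Sum>t<T. p t) + real T * e\<^sup>2 / 8)"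
    using hedge_potential_le[of e a b x z p T] assms by simp
  also have "\<dots> = exp (ln 2 + (- e * (\<Sum>t<T. p t) + real T * e\<^sup>2 / 8))"
    by (simp add: exp_add)
  finally have "- e * (\<Sum>t<T. x t) \<le> ln 2 + (- e * (\<Sum>t<T. p t) + real T * e\<^sup>2 / 8)"
    by simp
  hence "e * ((\<Sum>t<T. p t) - (\<Sum>t<T. x t)) \<le> e * (e * real T / 8 + ln 2 / e)"
    using e by (simp add: algebra_simps power2_eq_square)
  thus ?thesis using e by simp
qed

abbreviation alpha_hat where "alpha_hat l f y Om ea ew t \<equiv> fst (d2eal_state l f y Om ea ew t)"
abbreviation alpha_hat' where "alpha_hat' l f y Om ea ew t \<equiv> fst (snd (d2eal_state l f y Om ea ew t))"
abbreviation w_hat where "w_hat l f y Om ea ew t \<equiv> fst (snd (snd (d2eal_state l f y Om ea ew t)))"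
abbreviation f_hat where "f_hat l f y Om ea ew t \<equiv> snd (snd (snd (d2eal_state l f y Om ea ew t)))"

declare d2eal_state.simps [simp del]

lemma d2eal_state_0 [simp]:
  fixes l :: "'a::real_vector \<Rightarrow> 'a \<Rightarrow> real"
  shows "alpha_hat l f y Om ea ew 0 i = 1" "alpha_hat' l f y Om ea ew 0 i = 1"
    "w_hat l f y Om ea ew 0 i = 1" "f_hat l f y Om ea ew 0 i = f 1 i"
  by (simp_all add: d2eal_state.simps)

lemma d2eal_state_Suc [simp]:
  fixes l :: "'a::real_vector \<Rightarrow> 'a \<Rightarrow> real"
  shows "alpha_hat l f y Om ea ew (Suc t) i
           = alpha_hat l f y Om ea ew t i * exp (- ea * l (f (Suc t) i) (y (Suc t)))"
    and "alpha_hat' l f y Om ea ew (Suc t) i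
           = alpha_hat' l f y Om ea ew t i * exp (- ea * l (f_hat l f y Om ea ew t i) (y (Suc t)))"
    and "w_hat l f y Om ea ew (Suc t) i = w_hat l f y Om ea ew t i
           * exp (- ew * l (d2_fbar_next f t (d2eal_state l f y Om ea ew t) i) (y (Suc t)))"
    and "f_hat l f y Om ea ew (Suc t) i = d2_fhat_next f Om t (d2eal_state l f y Om ea ew t) i"
  by (simp_all add: d2eal_state.simps Let_def split: prod.split)

lemma d2_alpha_eq: "d2_alpha st i = fst st i / (fst st i + fst (snd st) i)"
  by (cases st) (simp add: d2_alpha_def)

lemma d2_fbar_next_eq:
  "d2_fbar_next f t st i = d2_alpha st i *\<^sub>R f (t + 1) i + (1 - d2_alpha st i) *\<^sub>R snd (snd (snd st)) i"
  by (cases st) (simp add: d2_fbar_next_def)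

lemma d2_w_eq:
  "d2_w Om t st i j =
     (if j \<in> Lam Om i t then fst (snd (snd st)) j / (\<Sum>j'\<in>Lam Om i t. fst (snd (snd st)) j') else 0)"
  by (cases st) (simp add: d2_w_def)

lemma d2eal_weights_pos:
  fixes l :: "'a::real_vector \<Rightarrow> 'a \<Rightarrow> real"
  shows "alpha_hat l f y Om ea ew t i > 0 \<and> alpha_hat' l f y Om ea ew t i > 0 \<and> w_hat l f y Om ea ew t i > 0"
  by (induction t) simp_all

lemma d2_alpha_bounds:
  fixes l :: "'a::real_vector \<Rightarrow> 'a \<Rightarrow> real"
  shows "0 \<le> d2_alpha (d2eal_state l f y Om ea ew t) i \<and> d2_alpha (d2eal_state l f y Om ea ew t) i \<le> 1"
  using d2eal_weights_pos[of l f y Om ea ew t i] by (simp add: d2_alpha_eq)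

lemma d2eal_predictions_in:
  fixes l :: "'a::real_vector \<Rightarrow> 'a \<Rightarrow> real"
  assumes convA: "convex A"
    and f_in: "\<And>t i. t \<ge> 1 \<Longrightarrow> i < N \<Longrightarrow> f t i \<in> A"
    and graph_sub: "\<And>i t. i < N \<Longrightarrow> Om i t \<subseteq> {..<N}"
    and i: "i < N"
  shows "f_hat l f y Om ea ew t i \<in> A"
    and "d2_fbar_next f t (d2eal_state l f y Om ea ew t) i \<in> A"
proof -
  let ?st = "d2eal_state l f y Om ea ew"
  have fbar_in: "d2_fbar_next f t (?st t) j \<in> A" if "f_hat l f y Om ea ew t j \<in> A" "j < N" for t j
    using convexD[OF convA f_in[of "t + 1" j] that(1)] d2_alpha_bounds[of l f y Om ea ew t j] that(2)
    by (simp add: d2_fbar_next_eq)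
  have fhat_in: "\<forall>j<N. f_hat l f y Om ea ew t j \<in> A" for t
  proof (induction t)
    case 0
    show ?case using f_in by simp
  next
    case (Suc t)
    show ?case
    proof (intro allI impI)
      fix j assume j: "j < N"
      have Lam_sub: "Lam Om j t \<subseteq> {..<N}"
        using graph_sub[OF j] j unfolding Lam_def by auto
      hence fin: "finite (Lam Om j t)"
        using finite_subset by blast
      have pw: "(\<Sum>k\<in>Lam Om j t. w_hat l f y Om ea ew t k) > 0"
        using d2eal_weights_pos[of l f y Om ea ew t] fin by (intro sum_pos) (auto simp: Lam_def)
      show "f_hat l f y Om ea ew (Suc t) j \<in> A"
        unfolding d2eal_state_Suc d2_fhat_next_def
      proof (rule convex_sum[OF fin convA])
        show "(\<Sum>k\<in>Lam Om j t. d2_w Om t (?st t) j k) = 1"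
          using pw by (simp add: d2_w_eq flip: sum_divide_distrib)
        show "0 \<le> d2_w Om t (?st t) j k" for k
          using d2eal_weights_pos[of l f y Om ea ew t k] pw by (simp add: d2_w_eq less_imp_le)
        show "d2_fbar_next f t (?st t) k \<in> A" if "k \<in> Lam Om j t" for k
          using fbar_in Suc.IH Lam_sub that by blast
      qed
    qed
  qed
  thus "f_hat l f y Om ea ew t i \<in> A" "d2_fbar_next f t (?st t) i \<in> A"
    using fbar_in i by auto
qed

lemma d2eal_individual_regret:
  fixes l :: "'a::real_vector \<Rightarrow> 'a \<Rightarrow> real"
  assumes eta: "ea > 0"
    and convA: "convex A"
    and loss_range: "\<And>a b. a \<in> A \<Longrightarrow> b \<in> Y \<Longrightarrow> 0 \<le> l a b \<and> l a b \<le> 1"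
    and loss_convex: "\<And>b. b \<in> Y \<Longrightarrow> convex_on A (\<lambda>a. l a b)"
    and y_in: "\<And>t. y t \<in> Y"
    and f_in: "\<And>t i. t \<ge> 1 \<Longrightarrow> i < N \<Longrightarrow> f t i \<in> A"
    and graph_sub: "\<And>i t. i < N \<Longrightarrow> Om i t \<subseteq> {..<N}"
    and i: "i < N"
  shows "cumLbar l f y Om ea ew T i - cumL l f y T i \<le> ea * real T / 8 + ln 2 / ea"
proof -
  let ?st = "d2eal_state l f y Om ea ew"
  let ?a = "\<lambda>t. alpha_hat l f y Om ea ew t i" and ?b = "\<lambda>t. alpha_hat' l f y Om ea ew t i"
  have fA: "f (Suc t) i \<in> A" and hA: "f_hat l f y Om ea ew t i \<in> A" for t
    using f_in i d2eal_predictions_in(1)[OF convA f_in graph_sub i] by auto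
  have mixture: "l (d2_fbar_next f t (?st t) i) (y (Suc t))
      \<le> ?a t / (?a t + ?b t) * l (f (Suc t) i) (y (Suc t))
         + (1 - ?a t / (?a t + ?b t)) * l (f_hat l f y Om ea ew t i) (y (Suc t))" for t
  proof -
    let ?\<alpha> = "d2_alpha (?st t) i"
    have "l ((1 - (1 - ?\<alpha>)) *\<^sub>R f (Suc t) i + (1 - ?\<alpha>) *\<^sub>R f_hat l f y Om ea ew t i) (y (Suc t))
          \<le> (1 - (1 - ?\<alpha>)) * l (f (Suc t) i) (y (Suc t)) + (1 - ?\<alpha>) * l (f_hat l f y Om ea ew t i) (y (Suc t))"
      using d2_alpha_bounds[of l f y Om ea ew t i] fA hA
      by (intro convex_onD[OF loss_convex[OF y_in]]) auto
    thus ?thesis by (simp add: d2_fbar_next_eq d2_alpha_eq)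
  qed
  have "(\<Sum>t<T. l (d2_fbar_next f t (?st t) i) (y (Suc t))) - (\<Sum>t<T. l (f (Suc t) i) (y (Suc t)))
        \<le> ea * real T / 8 + ln 2 / ea"
    using loss_range[OF fA y_in] loss_range[OF hA y_in] mixture
    by (intro hedge_two_experts_regret[OF eta, of ?a ?b]) auto
  thus ?thesis
    by (simp add: cumLbar_def cumL_def d2_fbar_def sum.atLeast1_atMost_eq)
qed

lemma cumL_le_cumL_add_lipschitz:
  fixes l :: "'a::real_normed_vector \<Rightarrow> 'a \<Rightarrow> real"
  assumes L1: "L1 \<ge> 0"
    and lip: "\<And>x1 x2 b. x1 \<in> A \<Longrightarrow> x2 \<in> A \<Longrightarrow> b \<in> Y \<Longrightarrow> \<bar>l x1 b - l x2 b\<bar> \<le> L1 * norm (x1 - x2)"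
    and y_in: "\<And>t. y t \<in> Y"
    and f_in: "\<And>t. t \<in> {1..T} \<Longrightarrow> f t i \<in> A \<and> f t j \<in> A"
    and delta: "\<And>t. t \<in> {1..T} \<Longrightarrow> norm (f t i - f t j) \<le> delta t"
    and Delta: "Delta_o \<ge> (\<Sum>t=1..T. delta t)"
  shows "cumL l f y T i \<le> cumL l f y T j + L1 * Delta_o"
proof -
  have "cumL l f y T i - cumL l f y T j = (\<Sum>t=1..T. l (f t i) (y t) - l (f t j) (y t))"
    unfolding cumL_def by (simp add: sum_subtractf)
  also have "\<dots> \<le> (\<Sum>t=1..T. L1 * delta t)"
  proof (rule sum_mono)
    fix t assume t: "t \<in> {1..T}"
    have "\<bar>l (f t i) (y t) - l (f t j) (y t)\<bar> \<le> L1 * norm (f t i - f t j)"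
      using f_in[OF t] y_in lip by blast
    also have "\<dots> \<le> L1 * delta t"
      using delta[OF t] L1 by (rule mult_left_mono)
    finally show "l (f t i) (y t) - l (f t j) (y t) \<le> L1 * delta t"
      by linarith
  qed
  also have "\<dots> \<le> L1 * Delta_o"
    using Delta L1 by (simp add: mult_left_mono flip: sum_distrib_left)
  finally show ?thesis by simp
qed

theorem theorem1:
  fixes N T :: nat
    and A Y :: "'a::euclidean_space set"
    and l :: "'a \<Rightarrow> 'a \<Rightarrow> real"
    and f :: "nat \<Rightarrow> nat \<Rightarrow> 'a" and y :: "nat \<Rightarrow> 'a"
    and Om :: "nat \<Rightarrow> nat \<Rightarrow> nat set"
    and eta_a eta_w L1 Delta_o :: real and delta :: "nat \<Rightarrow> real"
    and istar :: nat
  assumes N: "N \<ge> 1" and T: "T \<ge> 1"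
    and eta: "eta_a > 0" "eta_w > 0"
    and convA: "convex A" and convY: "convex Y"
    and loss_range: "\<And>a b. a \<in> A \<Longrightarrow> b \<in> Y \<Longrightarrow> 0 \<le> l a b \<and> l a b \<le> 1"
    and loss_convex: "\<And>b. b \<in> Y \<Longrightarrow> convex_on A (\<lambda>a. l a b)"
    and y_in: "\<And>t. y t \<in> Y"
    and f_in: "\<And>t i. t \<ge> 1 \<Longrightarrow> i < N \<Longrightarrow> f t i \<in> A"
    and graph_sub: "\<And>i t. i < N \<Longrightarrow> Om i t \<subseteq> {..<N}"
    and graph_irrefl: "\<And>i t. i \<notin> Om i t"
    and graph_sym: "\<And>i j t. i < N \<Longrightarrow> j < N \<Longrightarrow> j \<in> Om i t \<longleftrightarrow> i \<in> Om j t"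
    and L1: "L1 \<ge> 0"
    and lip: "\<And>x1 x2 b. x1 \<in> A \<Longrightarrow> x2 \<in> A \<Longrightarrow> b \<in> Y \<Longrightarrow> \<bar>l x1 b - l x2 b\<bar> \<le> L1 * norm (x1 - x2)"
    and delta_nn: "\<And>t. t \<in> {1..T} \<Longrightarrow> delta t \<ge> 0"
    and delta: "\<And>t i j. t \<in> {1..T} \<Longrightarrow> i < N \<Longrightarrow> j < N \<Longrightarrow> norm (f t i - f t j) \<le> delta t"
    and Delta: "Delta_o \<ge> (\<Sum>t=1..T. delta t)"
    and istar: "istar < N" "\<And>j. j < N \<Longrightarrow> cumL l f y T istar \<le> cumL l f y T j"
  shows "\<forall>i<N. cumLbar l f y Om eta_a eta_w T i - cumL l f y T istar
           \<le> eta_a * real T / 8 + ln 2 / eta_a + L1 * Delta_o"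
proof (intro allI impI)
  fix i assume i: "i < N"
  have "cumLbar l f y Om eta_a eta_w T i - cumL l f y T i \<le> eta_a * real T / 8 + ln 2 / eta_a"
    by (rule d2eal_individual_regret[OF eta(1) convA loss_range loss_convex y_in f_in graph_sub i])
  moreover have "cumL l f y T i \<le> cumL l f y T istar + L1 * Delta_o"
    using f_in delta i istar(1)
    by (intro cumL_le_cumL_add_lipschitz[OF L1 lip y_in _ _ Delta]) auto
  ultimately show "cumLbar l f y Om eta_a eta_w T i - cumL l f y T istar
           \<le> eta_a * real T / 8 + ln 2 / eta_a + L1 * Delta_o"
    by linarith
qed

end
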